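(* Let $N,K,S,E$ be positive integers with $S\le K$, let $\mathcal{K}=\{1,\dots,K\}$, $\mathcal{S}=\{1,\dots,S\}$, $\mathcal{M}=\{S+1,\dots,K\}$, $\mathcal{E}=\{1,\dots,E\}$. Let $\mathbf{h}_1,\dots,\mathbf{h}_K\in\mathbb{C}^N$, $\mathbf{g}_1,\dots,\mathbf{g}_E\in\mathbb{C}^N$, $\sigma^2,\sigma_{\mathsf e}^2,P>0$ and $\alpha>0$. For $j\in\{1,\dots,K+1\}$ let $\mathbf{e}_j\in\mathbb{R}^{K+1}$ be the $j$-th standard basis vector and $\mathrm{diag}\{\mathbf{v}\}$ the diagonal matrix with diagonal $\mathbf{v}$. Define the $N(K+1)\times N(K+1)$ Hermitian matrices $\mathbf{A}_{\mathsf c,k}=\mathbf{I}_{K+1}\otimes\mathbf{h}_k\mathbf{h}_k^{\mathsf H}+\frac{\sigma^2}{P}\mathbf{I}_{N(K+1)}$, $\mathbf{B}_{\mathsf c,k}=\mathbf{A}_{\mathsf c,k}-\mathrm{diag}\{\mathbf{e}_1\}\otimes\mathbf{h}_k\mathbf{h}_k^{\mathsf H}$, $\mathbf{A}_k=(\mathbf{I}_{K+1}-\mathrm{diag}\{\mathbf{e}_1\})\otimes\mathbf{h}_k\mathbf{h}_k^{\mathsf H}+\frac{\sigma^2}{P}\mathbf{I}_{N(K+1)}$, $\mathbf{B}_k=\mathbf{A}_k-\mathrm{diag}\{\mathbf{e}_{k+1}\}\otimes\mathbf{h}_k\mathbf{h}_k^{\mathsf H}$ for $k\in\mathcal{K}$;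 $\mathbf{A}^{(s)}_{\mathsf e}=\mathbf{I}_{K+1}\otimes\mathbf{g}_{\mathsf e}\mathbf{g}_{\mathsf e}^{\mathsf H}+\frac{\sigma_{\mathsf e}^2}{P}\mathbf{I}_{N(K+1)}$, $\mathbf{B}^{(s)}_{\mathsf e}=\mathbf{A}^{(s)}_{\mathsf e}-\mathrm{diag}\{\mathbf{e}_{s+1}\}\otimes\mathbf{g}_{\mathsf e}\mathbf{g}_{\mathsf e}^{\mathsf H}$ for $s\in\mathcal{S},\mathsf e\in\mathcal{E}$; $\mathbf{C}^{(s)}_u=(\mathbf{I}_{K+1}-\mathrm{diag}\{\mathbf{e}_1+\mathbf{e}_{u+1}\})\otimes\mathbf{h}_u\mathbf{h}_u^{\mathsf H}+\frac{\sigma^2}{P}\mathbf{I}_{N(K+1)}$, $\mathbf{D}^{(s)}_u=\mathbf{C}^{(s)}_u-\mathrm{diag}\{\mathbf{e}_{s+1}\}\otimes\mathbf{h}_u\mathbf{h}_u^{\mathsf H}$ for $s\in\mathcal{S},u\in\mathcal{K}\setminus\{s\}$. For nonzero $\bar{\mathbf f}\in\mathbb{C}^{N(K+1)}$ write $r_X(\bar{\mathbf f})=\frac{\bar{\mathbf f}^{\mathsf H}\mathbf{X}\bar{\mathbf f}}{\bar{\mathbf f}^{\mathsf H}\mathbf{Y}\bar{\mathbf f}}$ for the relevant pair, and set $w_{\mathsf c,k}(\bar{\mathbf f})=\big(\frac{\bar{\mathbf f}^{\mathsf H}\mathbf{A}_{\mathsf c,k}\bar{\mathbf f}}{\bar{\mathbf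 f}^{\mathsf H}\mathbf{B}_{\mathsf c,k}\bar{\mathbf f}}\big)^{-\frac{1}{\alpha\ln 2}}$, $w^{(s)}_{\mathsf e}(\bar{\mathbf f})=\big(\frac{\bar{\mathbf f}^{\mathsf H}\mathbf{A}^{(s)}_{\mathsf e}\bar{\mathbf f}}{\bar{\mathbf f}^{\mathsf H}\mathbf{B}^{(s)}_{\mathsf e}\bar{\mathbf f}}\big)^{\frac{1}{\alpha\ln 2}}$, $w^{(s)}_u(\bar{\mathbf f})=\big(\frac{\bar{\mathbf f}^{\mathsf H}\mathbf{C}^{(s)}_u\bar{\mathbf f}}{\bar{\mathbf f}^{\mathsf H}\mathbf{D}^{(s)}_u\bar{\mathbf f}}\big)^{\frac{1}{\alpha\ln 2}}$, and $W^{(s)}(\bar{\mathbf f})=\sum_{i\in\mathcal{E}}w^{(s)}_i(\bar{\mathbf f})+\sum_{i\in\mathcal{K}\setminus\{s\}}w^{(s)}_i(\bar{\mathbf f})$. Consider the objective $$L(\bar{\mathbf f})=-\alpha\ln\Big(\sum_{k\in\mathcal{K}}w_{\mathsf c,k}(\bar{\mathbf f})\Big)+\sum_{s\in\mathcal{S}}\Big[\log_2\frac{\bar{\mathbf f}^{\mathsf H}\mathbf{A}_s\bar{\mathbf f}}{\bar{\mathbf f}^{\mathsf H}\mathbf{B}_s\bar{\mathbf f}}-\alpha\ln W^{(s)}(\bar{\mathbf f})\Big]+\sum_{m\in\mathcal{M}}\log_2\frac{\bar{\mathbf f}^{\mathsf H}\mathbf{A}_m\bar{\mathbf f}}{\bar{\mathbf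 f}^{\mathsf H}\mathbf{B}_m\bar{\mathbf f}}.$$ Define $$\lambda(\bar{\mathbf f})=\Big[\sum_{k\in\mathcal{K}}w_{\mathsf c,k}(\bar{\mathbf f})\Big]^{-\alpha}\Big[\prod_{s\in\mathcal{S}}\Big(\frac{\bar{\mathbf f}^{\mathsf H}\mathbf{A}_s\bar{\mathbf f}}{\bar{\mathbf f}^{\mathsf H}\mathbf{B}_s\bar{\mathbf f}}\Big)^{\frac1{\ln2}}-\prod_{s\in\mathcal{S}}\big(W^{(s)}(\bar{\mathbf f})\big)^{\alpha}\Big]\prod_{m\in\mathcal{M}}\Big(\frac{\bar{\mathbf f}^{\mathsf H}\mathbf{A}_m\bar{\mathbf f}}{\bar{\mathbf f}^{\mathsf H}\mathbf{B}_m\bar{\mathbf f}}\Big)^{\frac1{\ln2}},$$ let $\lambda_{\mathsf{num}}(\bar{\mathbf f}),\lambda_{\mathsf{den}}(\bar{\mathbf f})$ be any scalar functions with $\lambda(\bar{\mathbf f})=\lambda_{\mathsf{num}}(\bar{\mathbf f})/\lambda_{\mathsf{den}}(\bar{\mathbf f})$, and define $$\mathbf{A}_{\mathsf{KKT}}(\bar{\mathbf f})=\lambda_{\mathsf{num}}(\bar{\mathbf f})\Big[\sum_{k\in\mathcal{K}}\frac{w_{\mathsf c,k}}{\sum_{l\in\mathcal{K}}w_{\mathsf c,l}}\frac{\mathbf{A}_{\mathsf c,k}}{\bar{\mathbf f}^{\mathsf H}\mathbf{A}_{\mathsf c,k}\bar{\mathbf f}}+\sum_{s\in\mathcal{S}}\frac{\mathbf{A}_s}{\bar{\mathbf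 f}^{\mathsf H}\mathbf{A}_s\bar{\mathbf f}}+\sum_{s\in\mathcal{S}}\frac{\sum_{\mathsf e\in\mathcal{E}}w^{(s)}_{\mathsf e}\frac{\mathbf{B}^{(s)}_{\mathsf e}}{\bar{\mathbf f}^{\mathsf H}\mathbf{B}^{(s)}_{\mathsf e}\bar{\mathbf f}}+\sum_{u\in\mathcal{K}\setminus\{s\}}w^{(s)}_u\frac{\mathbf{D}^{(s)}_u}{\bar{\mathbf f}^{\mathsf H}\mathbf{D}^{(s)}_u\bar{\mathbf f}}}{W^{(s)}}+\sum_{m\in\mathcal{M}}\frac{\mathbf{A}_m}{\bar{\mathbf f}^{\mathsf H}\mathbf{A}_m\bar{\mathbf f}}\Big],$$ $$\mathbf{B}_{\mathsf{KKT}}(\bar{\mathbf f})=\lambda_{\mathsf{den}}(\bar{\mathbf f})\Big[\sum_{k\in\mathcal{K}}\frac{w_{\mathsf c,k}}{\sum_{l\in\mathcal{K}}w_{\mathsf c,l}}\frac{\mathbf{B}_{\mathsf c,k}}{\bar{\mathbf f}^{\mathsf H}\mathbf{B}_{\mathsf c,k}\bar{\mathbf f}}+\sum_{s\in\mathcal{S}}\frac{\mathbf{B}_s}{\bar{\mathbf f}^{\mathsf H}\mathbf{B}_s\bar{\mathbf f}}+\sum_{s\in\mathcal{S}}\frac{\sum_{\mathsf e\in\mathcal{E}}w^{(s)}_{\mathsf e}\frac{\mathbf{A}^{(s)}_{\mathsf e}}{\bar{\mathbf f}^{\mathsf H}\mathbf{A}^{(s)}_{\mathsf e}\bar{\mathbf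 f}}+\sum_{u\in\mathcal{K}\setminus\{s\}}w^{(s)}_u\frac{\mathbf{C}^{(s)}_u}{\bar{\mathbf f}^{\mathsf H}\mathbf{C}^{(s)}_u\bar{\mathbf f}}}{W^{(s)}}+\sum_{m\in\mathcal{M}}\frac{\mathbf{B}_m}{\bar{\mathbf f}^{\mathsf H}\mathbf{B}_m\bar{\mathbf f}}\Big],$$ all weights evaluated at $\bar{\mathbf f}$. Then the first-order optimality condition of maximizing $L$ over $\bar{\mathbf f}$ (ignoring the power constraint $\|\bar{\mathbf f}\|^2=1$), namely $\partial L(\bar{\mathbf f})/\partial\bar{\mathbf f}^{\mathsf H}=\mathbf{0}$, is satisfied at $\bar{\mathbf f}$ if $$\mathbf{B}_{\mathsf{KKT}}^{-1}(\bar{\mathbf f})\,\mathbf{A}_{\mathsf{KKT}}(\bar{\mathbf f})\,\bar{\mathbf f}=\lambda(\bar{\mathbf f})\,\bar{\mathbf f}.$$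
   Context: This arises from secure rate-splitting precoding in a downlink MIMO system: $\bar{\mathbf f}=[\mathbf f_{\mathsf c}^{\mathsf T},\mathbf f_1^{\mathsf T},\dots,\mathbf f_K^{\mathsf T}]^{\mathsf T}$ stacks the common-stream precoder and the $K$ private-stream precoders; users in $\mathcal S$ are secret users, users in $\mathcal M$ are normal users, $\mathbf h_k$ are user channels and $\mathbf g_{\mathsf e}$ eavesdropper channels. $L$ is the sum secrecy spectral-efficiency objective in which the minimum over common-stream rates and the maximum over leakage rates are replaced by their LogSumExp smoothings. $\otimes$ is the Kronecker product, $(\cdot)^{\mathsf H}$ the conjugate transpose, and $\partial/\partial\bar{\mathbf f}^{\mathsf H}$ the Wirtinger derivative.
   Formalization: The first-order optimality condition follows from the eigenvector equation only at points $\bar{\mathbf f}$ with $\lambda(\bar{\mathbf f})\neq 0$. The statement above fails without it. *)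

theory Defs
  imports Complex_Main
begin

text \<open>A vector in C^(N(K+1)) is a function nat => complex of which only the
entries with index < N*(K+1) matter; an N(K+1) x N(K+1) matrix is a function
nat => nat => complex of which only entries with indices < N*(K+1) matter.
Index i corresponds to block i div N (block 0 = common stream f_c, block k = private
stream f_k) and position i mod N inside the block. Thus the j-th standard basis vector
e_j of R^(K+1) (j = 1..K+1) corresponds to block j-1. Channels: h k (k = 1..K) and
g e (e = 1..E) are vectors in C^N given as functions nat => complex (entries < N).\<close>

type_synonym cvec = "nat \<Rightarrow> complex"
type_synonym cmat = "nat \<Rightarrow> nat \<Rightarrow> complex"

text \<open>diag(d) (Kronecker product) M, for d indexed by blocks 0..K and M an N x N matrix.\<close>
definition kron :: "nat \<Rightarrow> (nat \<Rightarrow> real) \<Rightarrow> cmat \<Rightarrow> cmat" where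
  "kron N d M = (\<lambda>i j. if i div N = j div N
                        then complex_of_real (d (i div N)) * M (i mod N) (j mod N) else 0)"

definition outer :: "cvec \<Rightarrow> cmat" where
  "outer v = (\<lambda>a b. v a * cnj (v b))"

definition noise :: "real \<Rightarrow> cmat" where
  "noise c = (\<lambda>i j. if i = j then complex_of_real c else 0)"

text \<open>Quadratic form f^H X f (real for Hermitian X; we take its real part).\<close>
definition qf :: "nat \<Rightarrow> cmat \<Rightarrow> cvec \<Rightarrow> real" where
  "qf n X f = Re (\<Sum>i<n. \<Sum>j<n. cnj (f i) * X i j * f j)"

definition ratio :: "nat \<Rightarrow> cmat \<Rightarrow> cmat \<Rightarrow> cvec \<Rightarrow> real" where
  "ratio n X Y f = qf n X f / qf n Y f"

text \<open>The matrices (c stands for sigma^2/P resp. sigma_e^2/P).\<close>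
definition Ac :: "nat \<Rightarrow> (nat \<Rightarrow> cvec) \<Rightarrow> real \<Rightarrow> nat \<Rightarrow> cmat" where
  "Ac N h c k = (\<lambda>i j. kron N (\<lambda>_. 1) (outer (h k)) i j + noise c i j)"
definition Bc :: "nat \<Rightarrow> (nat \<Rightarrow> cvec) \<Rightarrow> real \<Rightarrow> nat \<Rightarrow> cmat" where
  "Bc N h c k = (\<lambda>i j. Ac N h c k i j - kron N (\<lambda>b. if b = 0 then 1 else 0) (outer (h k)) i j)"
definition Ap :: "nat \<Rightarrow> (nat \<Rightarrow> cvec) \<Rightarrow> real \<Rightarrow> nat \<Rightarrow> cmat" where
  "Ap N h c k = (\<lambda>i j. kron N (\<lambda>b. if b = 0 then 0 else 1) (outer (h k)) i j + noise c i j)"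
definition Bp :: "nat \<Rightarrow> (nat \<Rightarrow> cvec) \<Rightarrow> real \<Rightarrow> nat \<Rightarrow> cmat" where
  "Bp N h c k = (\<lambda>i j. Ap N h c k i j - kron N (\<lambda>b. if b = k then 1 else 0) (outer (h k)) i j)"
definition Ae :: "nat \<Rightarrow> (nat \<Rightarrow> cvec) \<Rightarrow> real \<Rightarrow> nat \<Rightarrow> cmat" where
  "Ae N g ce e = (\<lambda>i j. kron N (\<lambda>_. 1) (outer (g e)) i j + noise ce i j)"
definition Be :: "nat \<Rightarrow> (nat \<Rightarrow> cvec) \<Rightarrow> real \<Rightarrow> nat \<Rightarrow> nat \<Rightarrow> cmat" where
  "Be N g ce s e = (\<lambda>i j. Ae N g ce e i j - kron N (\<lambda>b. if b = s then 1 else 0) (outer (g e)) i j)"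
definition Cu :: "nat \<Rightarrow> (nat \<Rightarrow> cvec) \<Rightarrow> real \<Rightarrow> nat \<Rightarrow> cmat" where
  "Cu N h c u = (\<lambda>i j. kron N (\<lambda>b. if b = 0 \<or> b = u then 0 else 1) (outer (h u)) i j + noise c i j)"
definition Du :: "nat \<Rightarrow> (nat \<Rightarrow> cvec) \<Rightarrow> real \<Rightarrow> nat \<Rightarrow> nat \<Rightarrow> cmat" where
  "Du N h c s u = (\<lambda>i j. Cu N h c u i j - kron N (\<lambda>b. if b = s then 1 else 0) (outer (h u)) i j)"

definition wc :: "nat \<Rightarrow> nat \<Rightarrow> (nat \<Rightarrow> cvec) \<Rightarrow> real \<Rightarrow> real \<Rightarrow> cvec \<Rightarrow> nat \<Rightarrow> real" where
  "wc N K h c \<alpha> f k = ratio (N*(K+1)) (Ac N h c k) (Bc N h c k) f powr (- 1 / (\<alpha> * ln 2))"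
definition we :: "nat \<Rightarrow> nat \<Rightarrow> (nat \<Rightarrow> cvec) \<Rightarrow> real \<Rightarrow> real \<Rightarrow> cvec \<Rightarrow> nat \<Rightarrow> nat \<Rightarrow> real" where
  "we N K g ce \<alpha> f s e = ratio (N*(K+1)) (Ae N g ce e) (Be N g ce s e) f powr (1 / (\<alpha> * ln 2))"
definition wu :: "nat \<Rightarrow> nat \<Rightarrow> (nat \<Rightarrow> cvec) \<Rightarrow> real \<Rightarrow> real \<Rightarrow> cvec \<Rightarrow> nat \<Rightarrow> nat \<Rightarrow> real" where
  "wu N K h c \<alpha> f s u = ratio (N*(K+1)) (Cu N h c u) (Du N h c s u) f powr (1 / (\<alpha> * ln 2))"
definition Wsum :: "nat \<Rightarrow> nat \<Rightarrow> nat \<Rightarrow> (nat \<Rightarrow> cvec) \<Rightarrow> (nat \<Rightarrow> cvec) \<Rightarrow> real \<Rightarrow> real \<Rightarrow> real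
                    \<Rightarrow> cvec \<Rightarrow> nat \<Rightarrow> real" where
  "Wsum N K E h g c ce \<alpha> f s =
     (\<Sum>e\<in>{1..E}. we N K g ce \<alpha> f s e) + (\<Sum>u\<in>{1..K} - {s}. wu N K h c \<alpha> f s u)"

definition Lobj :: "nat \<Rightarrow> nat \<Rightarrow> nat \<Rightarrow> nat \<Rightarrow> (nat \<Rightarrow> cvec) \<Rightarrow> (nat \<Rightarrow> cvec) \<Rightarrow> real \<Rightarrow> real
                    \<Rightarrow> real \<Rightarrow> cvec \<Rightarrow> real" where
  "Lobj N K S E h g c ce \<alpha> f =
     - \<alpha> * ln (\<Sum>k\<in>{1..K}. wc N K h c \<alpha> f k)
     + (\<Sum>s\<in>{1..S}. log 2 (ratio (N*(K+1)) (Ap N h c s) (Bp N h c s) f)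
                     - \<alpha> * ln (Wsum N K E h g c ce \<alpha> f s))
     + (\<Sum>m\<in>{S+1..K}. log 2 (ratio (N*(K+1)) (Ap N h c m) (Bp N h c m) f))"

definition lam :: "nat \<Rightarrow> nat \<Rightarrow> nat \<Rightarrow> nat \<Rightarrow> (nat \<Rightarrow> cvec) \<Rightarrow> (nat \<Rightarrow> cvec) \<Rightarrow> real \<Rightarrow> real
                    \<Rightarrow> real \<Rightarrow> cvec \<Rightarrow> real" where
  "lam N K S E h g c ce \<alpha> f =
     (\<Sum>k\<in>{1..K}. wc N K h c \<alpha> f k) powr (- \<alpha>)
     * ((\<Prod>s\<in>{1..S}. ratio (N*(K+1)) (Ap N h c s) (Bp N h c s) f powr (1 / ln 2))
        - (\<Prod>s\<in>{1..S}. Wsum N K E h g c ce \<alpha> f s powr \<alpha>))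
     * (\<Prod>m\<in>{S+1..K}. ratio (N*(K+1)) (Ap N h c m) (Bp N h c m) f powr (1 / ln 2))"

definition term_mat :: "real \<Rightarrow> nat \<Rightarrow> cmat \<Rightarrow> cvec \<Rightarrow> cmat" where
  "term_mat w n X f = (\<lambda>i j. complex_of_real (w / qf n X f) * X i j)"

definition AKKT :: "nat \<Rightarrow> nat \<Rightarrow> nat \<Rightarrow> nat \<Rightarrow> (nat \<Rightarrow> cvec) \<Rightarrow> (nat \<Rightarrow> cvec) \<Rightarrow> real \<Rightarrow> real
                    \<Rightarrow> real \<Rightarrow> complex \<Rightarrow> cvec \<Rightarrow> cmat" where
  "AKKT N K S E h g c ce \<alpha> lnum f = (let n = N*(K+1) in (\<lambda>i j. lnum *
     ((\<Sum>k\<in>{1..K}. term_mat (wc N K h c \<alpha> f k / (\<Sum>l\<in>{1..K}. wc N K h c \<alpha> f l)) n (Ac N h c k) f i j)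
    + (\<Sum>s\<in>{1..S}. term_mat 1 n (Ap N h c s) f i j)
    + (\<Sum>s\<in>{1..S}. complex_of_real (1 / Wsum N K E h g c ce \<alpha> f s) *
         ((\<Sum>e\<in>{1..E}. term_mat (we N K g ce \<alpha> f s e) n (Be N g ce s e) f i j)
        + (\<Sum>u\<in>{1..K} - {s}. term_mat (wu N K h c \<alpha> f s u) n (Du N h c s u) f i j)))
    + (\<Sum>m\<in>{S+1..K}. term_mat 1 n (Ap N h c m) f i j))))"

definition BKKT :: "nat \<Rightarrow> nat \<Rightarrow> nat \<Rightarrow> nat \<Rightarrow> (nat \<Rightarrow> cvec) \<Rightarrow> (nat \<Rightarrow> cvec) \<Rightarrow> real \<Rightarrow> real
                    \<Rightarrow> real \<Rightarrow> complex \<Rightarrow> cvec \<Rightarrow> cmat" where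
  "BKKT N K S E h g c ce \<alpha> lden f = (let n = N*(K+1) in (\<lambda>i j. lden *
     ((\<Sum>k\<in>{1..K}. term_mat (wc N K h c \<alpha> f k / (\<Sum>l\<in>{1..K}. wc N K h c \<alpha> f l)) n (Bc N h c k) f i j)
    + (\<Sum>s\<in>{1..S}. term_mat 1 n (Bp N h c s) f i j)
    + (\<Sum>s\<in>{1..S}. complex_of_real (1 / Wsum N K E h g c ce \<alpha> f s) *
         ((\<Sum>e\<in>{1..E}. term_mat (we N K g ce \<alpha> f s e) n (Ae N g ce e) f i j)
        + (\<Sum>u\<in>{1..K} - {s}. term_mat (wu N K h c \<alpha> f s u) n (Cu N h c u) f i j)))
    + (\<Sum>m\<in>{S+1..K}. term_mat 1 n (Bp N h c m) f i j))))"

definition mvec :: "nat \<Rightarrow> cmat \<Rightarrow> cvec \<Rightarrow> cvec" where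
  "mvec n X v = (\<lambda>i. \<Sum>j<n. X i j * v j)"

definition is_inverse :: "nat \<Rightarrow> cmat \<Rightarrow> cmat \<Rightarrow> bool" where
  "is_inverse n Xi X \<longleftrightarrow> (\<forall>i<n. \<forall>j<n.
      (\<Sum>k<n. Xi i k * X k j) = (if i = j then 1 else 0) \<and>
      (\<Sum>k<n. X i k * Xi k j) = (if i = j then 1 else 0))"

text \<open>Wirtinger derivative dL/d(conj f) of a real-valued function L of a complex
n-vector, componentwise: dL/d(conj f_i) = (dL/dx_i + i dL/dy_i)/2, where f_i = x_i + i y_i.
has_wirtinger_conj_grad n L f G means these partial derivatives exist at f and equal G.\<close>
definition has_wirtinger_conj_grad :: "nat \<Rightarrow> (cvec \<Rightarrow> real) \<Rightarrow> cvec \<Rightarrow> cvec \<Rightarrow> bool" where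
  "has_wirtinger_conj_grad n L f G \<longleftrightarrow> (\<forall>i<n. \<exists>dx dy.
      ((\<lambda>t. L (f(i := f i + complex_of_real t))) has_real_derivative dx) (at 0) \<and>
      ((\<lambda>t. L (f(i := f i + \<i> * complex_of_real t))) has_real_derivative dy) (at 0) \<and>
      G i = (complex_of_real dx + \<i> * complex_of_real dy) / 2)"

end

theory Submission
  imports Defs
begin

text \<open>Every matrix X in L has the form diag d \<otimes> v v^H + c I with d \<ge> 0 and c > 0, so all
  quadratic forms f^H X f are positive at f \<noteq> 0 and L is differentiable there. Moving coordinate i
  of f by t z changes f^H X f at rate 2 Re (conj z (X f)_i). By the chain rule, the derivative of L
  in that direction is 2 Re (conj z (G f)_i) with G = (A_KKT(1) - B_KKT(1)) / ln 2, where A_KKT(1) and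
  B_KKT(1) are the KKT matrices with lambda_num = lambda_den = 1; so G f is the Wirtinger gradient.
  The eigen-equation B_KKT^-1 A_KKT f = lambda f gives lambda_num A_KKT(1) f
  = lambda lambda_den B_KKT(1) f = lambda_num B_KKT(1) f, and lambda_num \<noteq> 0 because
  lambda \<noteq> 0, so the gradient vanishes.\<close>

definition hermitian :: "nat \<Rightarrow> cmat \<Rightarrow> bool" where
  "hermitian n X \<longleftrightarrow> (\<forall>a<n. \<forall>b<n. X b a = cnj (X a b))"

lemma qf_add: "qf n (\<lambda>a b. X a b + Y a b) f = qf n X f + qf n Y f"
  unfolding qf_def by (simp add: distrib_left distrib_right sum.distrib)

lemma hermitian_sesq_conj:
  assumes "hermitian n X"
  shows "(\<Sum>a<n. \<Sum>b<n. cnj (u a) * X a b * v b) = cnj (\<Sum>a<n. cnj (v a) * mvec n X u a)"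
proof -
  have entry: "cnj (u a) * X a b * v b = cnj (cnj (v b) * X b a * u a)" if "a < n" "b < n" for a b
  proof -
    have "X a b = cnj (X b a)"
      using assms that unfolding hermitian_def by blast
    then show ?thesis by (simp add: ac_simps)
  qed
  have "(\<Sum>a<n. \<Sum>b<n. cnj (u a) * X a b * v b) = (\<Sum>a<n. \<Sum>b<n. cnj (cnj (v b) * X b a * u a))"
    using entry by (intro sum.cong refl) auto
  also have "\<dots> = cnj (\<Sum>a<n. cnj (v a) * mvec n X u a)"
    by (simp add: mvec_def sum_distrib_left mult.assoc) (rule sum.swap)
  finally show ?thesis .
qed

lemma qf_line:
  assumes "hermitian n X"
  shows "qf n X (\<lambda>a. u a + complex_of_real t * v a)
    = qf n X u + t * (2 * Re (\<Sum>a<n. cnj (v a) * mvec n X u a)) + t\<^sup>2 * qf n X v"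
proof -
  have "(\<Sum>a<n. \<Sum>b<n. cnj (u a + complex_of_real t * v a) * X a b * (u b + complex_of_real t * v b))
    = (\<Sum>a<n. \<Sum>b<n. cnj (u a) * X a b * u b)
      + complex_of_real t * ((\<Sum>a<n. \<Sum>b<n. cnj (v a) * X a b * u b)
                             + (\<Sum>a<n. \<Sum>b<n. cnj (u a) * X a b * v b))
      + complex_of_real (t\<^sup>2) * (\<Sum>a<n. \<Sum>b<n. cnj (v a) * X a b * v b)"
    by (simp add: algebra_simps sum.distrib sum_distrib_left power2_eq_square)
  moreover have "(\<Sum>a<n. \<Sum>b<n. cnj (v a) * X a b * u b) = (\<Sum>a<n. cnj (v a) * mvec n X u a)"
    by (simp add: mvec_def sum_distrib_left mult.assoc)
  ultimately show ?thesis
    unfolding qf_def hermitian_sesq_conj[OF assms, of u v] by (simp add: power2_eq_square)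
qed

definition perturb :: "cvec \<Rightarrow> nat \<Rightarrow> complex \<Rightarrow> real \<Rightarrow> cvec" where
  "perturb f i z t = f(i := f i + z * complex_of_real t)"

definition qf_deriv :: "nat \<Rightarrow> cmat \<Rightarrow> cvec \<Rightarrow> nat \<Rightarrow> complex \<Rightarrow> real" where
  "qf_deriv n X f i z = 2 * Re (cnj z * mvec n X f i)"

lemma perturb_0 [simp]: "perturb f i z 0 = f"
  unfolding perturb_def by simp

lemma qf_perturb:
  assumes "i < n" "hermitian n X"
  shows "qf n X (perturb f i z t)
    = qf n X f + t * qf_deriv n X f i z + t\<^sup>2 * qf n X (\<lambda>a. if a = i then z else 0)"
proof -
  have "perturb f i z t = (\<lambda>a. f a + complex_of_real t * (if a = i then z else 0))"
    by (auto simp: perturb_def fun_eq_iff)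
  moreover have "(\<Sum>a<n. cnj (if a = i then z else 0) * mvec n X f a) = cnj z * mvec n X f i"
    using assms(1) by (simp add: if_distrib if_distribR cong: if_cong)
  ultimately show ?thesis
    unfolding qf_deriv_def by (simp add: qf_line[OF assms(2)])
qed

lemma qf_perturb_deriv:
  assumes "i < n" "hermitian n X"
  shows "((\<lambda>t. qf n X (perturb f i z t)) has_real_derivative qf_deriv n X f i z) (at 0)"
  unfolding qf_perturb[OF assms] by (auto intro!: derivative_eq_intros)

lemma qf_deriv_add: "qf_deriv n (\<lambda>a b. X a b + Y a b) f i z = qf_deriv n X f i z + qf_deriv n Y f i z"
  unfolding qf_deriv_def mvec_def by (simp add: distrib_left distrib_right sum.distrib)

lemma qf_deriv_sum: "qf_deriv n (\<lambda>a b. \<Sum>k\<in>A. F k a b) f i z = (\<Sum>k\<in>A. qf_deriv n (F k) f i z)"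
  unfolding qf_deriv_def mvec_def
  by (simp add: sum_distrib_left sum_distrib_right sum.swap[of _ A])

lemma qf_deriv_scale:
  "qf_deriv n (\<lambda>a b. complex_of_real r * X a b) f i z = r * qf_deriv n X f i z"
proof -
  have "mvec n (\<lambda>a b. complex_of_real r * X a b) f i = complex_of_real r * mvec n X f i"
    by (simp add: mvec_def sum_distrib_left mult.assoc)
  then show ?thesis
    by (simp add: qf_deriv_def mult.left_commute[of "cnj z"])
qed

lemma qf_deriv_term_mat: "qf_deriv n (term_mat w n X f) f i z = w / qf n X f * qf_deriv n X f i z"
  unfolding term_mat_def by (rule qf_deriv_scale)

definition dlog_ratio :: "nat \<Rightarrow> cmat \<Rightarrow> cmat \<Rightarrow> cvec \<Rightarrow> nat \<Rightarrow> complex \<Rightarrow> real" where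
  "dlog_ratio n X Y f i z = qf_deriv n X f i z / qf n X f - qf_deriv n Y f i z / qf n Y f"

context
  fixes n :: nat and X Y :: cmat and f :: cvec and i :: nat
  assumes i_lt: "i < n"
    and hermitian: "hermitian n X" "hermitian n Y"
    and qf_pos: "qf n X f > 0" "qf n Y f > 0"
begin

lemma ratio_pos: "ratio n X Y f > 0"
  unfolding ratio_def using qf_pos by simp

lemma ratio_perturb_deriv:
  "((\<lambda>t. ratio n X Y (perturb f i z t)) has_real_derivative ratio n X Y f * dlog_ratio n X Y f i z) (at 0)"
  unfolding ratio_def
  by (rule DERIV_cong[OF DERIV_divide[OF qf_perturb_deriv qf_perturb_deriv]])
    (use i_lt hermitian qf_pos in \<open>simp_all add: dlog_ratio_def field_simps\<close>)

lemma log_ratio_perturb_deriv: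
  "((\<lambda>t. log b (ratio n X Y (perturb f i z t))) has_real_derivative dlog_ratio n X Y f i z / ln b) (at 0)"
  by (rule DERIV_cong[OF DERIV_chain2[OF DERIV_log ratio_perturb_deriv]])
    (use ratio_pos in simp_all)

lemma ratio_powr_perturb_deriv:
  "((\<lambda>t. ratio n X Y (perturb f i z t) powr p) has_real_derivative
     p * ratio n X Y f powr p * dlog_ratio n X Y f i z) (at 0)"
  by (rule DERIV_cong[OF DERIV_fun_powr[OF ratio_perturb_deriv]])
    (use ratio_pos in \<open>simp_all add: powr_diff\<close>)

end

lemma has_wirtinger_conj_gradI:
  assumes "\<And>i z. i < n \<Longrightarrow>
    ((\<lambda>t. L (perturb f i z t)) has_real_derivative 2 * Re (cnj z * G i)) (at 0)"
  shows "has_wirtinger_conj_grad n L f G"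
  unfolding has_wirtinger_conj_grad_def
proof (intro allI impI)
  fix i assume "i < n"
  from assms[OF this, of 1] assms[OF this, of \<i>]
  show "\<exists>dx dy. ((\<lambda>t. L (f(i := f i + complex_of_real t))) has_real_derivative dx) (at 0) \<and>
      ((\<lambda>t. L (f(i := f i + \<i> * complex_of_real t))) has_real_derivative dy) (at 0) \<and>
      G i = (complex_of_real dx + \<i> * complex_of_real dy) / 2"
    by (intro exI[of _ "2 * Re (G i)"] exI[of _ "2 * Im (G i)"]) (simp add: perturb_def complex_eq_iff)
qed

lemma has_wirtinger_conj_grad_cong:
  assumes "has_wirtinger_conj_grad n L f G" "\<And>i. i < n \<Longrightarrow> G i = G' i"
  shows "has_wirtinger_conj_grad n L f G'"
  using assms unfolding has_wirtinger_conj_grad_def by simp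

lemma mvec_scale: "mvec n (\<lambda>a b. w * X a b) v i = w * mvec n X v i"
  unfolding mvec_def by (simp add: sum_distrib_left mult.assoc)

lemma mvec_generalized_eigen_of_inverse:
  assumes "is_inverse n Binv B" and "\<forall>j<n. mvec n Binv (mvec n A f) j = \<mu> * f j" and "i < n"
  shows "mvec n A f i = \<mu> * mvec n B f i"
proof -
  have right_inverse: "mvec n B (mvec n Binv y) i = y i" for y
  proof -
    have "mvec n B (mvec n Binv y) i = (\<Sum>k<n. \<Sum>j<n. B i k * Binv k j * y j)"
      unfolding mvec_def by (simp add: sum_distrib_left mult.assoc)
    also have "\<dots> = (\<Sum>j<n. (\<Sum>k<n. B i k * Binv k j) * y j)"
      by (subst sum.swap) (simp add: sum_distrib_right)
    also have "\<dots> = (\<Sum>j<n. if i = j then y j else 0)"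
      using assms(1,3) unfolding is_inverse_def by (intro sum.cong) auto
    also have "\<dots> = y i"
      using assms(3) by simp
    finally show ?thesis .
  qed
  have "mvec n A f i = mvec n B (mvec n Binv (mvec n A f)) i"
    by (rule right_inverse[symmetric])
  also have "\<dots> = mvec n B (\<lambda>j. \<mu> * f j) i"
    using assms(2) unfolding mvec_def by (intro sum.cong) auto
  also have "\<dots> = \<mu> * mvec n B f i"
    unfolding mvec_def by (simp add: sum_distrib_left ac_simps)
  finally show ?thesis .
qed

definition kron_noise :: "nat \<Rightarrow> (nat \<Rightarrow> real) \<Rightarrow> cvec \<Rightarrow> real \<Rightarrow> cmat" where
  "kron_noise N d v c = (\<lambda>a b. kron N d (outer v) a b + noise c a b)"

lemma hermitian_kron_noise: "hermitian n (kron_noise N d v c)"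
  unfolding hermitian_def kron_noise_def kron_def outer_def noise_def by auto

lemma kron_noise_minus_kron:
  "(\<lambda>a b. kron_noise N d v c a b - kron N d' (outer v) a b) = kron_noise N (\<lambda>b. d b - d' b) v c"
  unfolding kron_noise_def kron_def by (auto simp: fun_eq_iff algebra_simps)

lemma qf_noise: "qf n (noise c) f = c * (\<Sum>a<n. (cmod (f a))\<^sup>2)"
proof -
  have "qf n (noise c) f = Re (\<Sum>a<n. complex_of_real c * (f a * cnj (f a)))"
    unfolding qf_def noise_def by (simp add: if_distrib if_distribR ac_simps cong: if_cong)
  then show ?thesis
    by (simp add: complex_mult_cnj cmod_power2 sum_distrib_left)
qed

text \<open>The matrix diag d \<otimes> v v^H is block diagonal, and its block \<beta> contributes
  d \<beta> |v^H f_\<beta>|^2 to the quadratic form.\<close>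
lemma qf_kron_outer_nonneg:
  assumes "\<And>b. d b \<ge> 0"
  shows "qf n (kron N d (outer v)) f \<ge> 0"
proof -
  define p where "p = (\<lambda>a::nat. a div N)"
  define u where "u = (\<lambda>a. cnj (f a) * v (a mod N))"
  define block where "block = (\<lambda>\<beta>. {a \<in> {..<n}. p a = \<beta>})"
  define T where "T = (\<lambda>\<beta>. \<Sum>b\<in>block \<beta>. u b)"
  have "(\<Sum>a<n. \<Sum>b<n. cnj (f a) * kron N d (outer v) a b * f b)
      = (\<Sum>a<n. \<Sum>b<n. if p a = p b then complex_of_real (d (p a)) * u a * cnj (u b) else 0)"
    unfolding kron_def outer_def p_def u_def
    by (intro sum.cong refl) (auto simp: algebra_simps)
  also have "\<dots> = (\<Sum>a<n. complex_of_real (d (p a)) * u a * cnj (T (p a)))"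
    unfolding T_def block_def
    by (intro sum.cong refl)
      (simp add: sum.inter_filter[symmetric] sum_distrib_left Int_def eq_commute)
  also have "\<dots> = (\<Sum>\<beta>\<in>p ` {..<n}. \<Sum>a\<in>block \<beta>. complex_of_real (d (p a)) * u a * cnj (T (p a)))"
    unfolding block_def by (rule sum.image_gen) simp
  also have "\<dots> = (\<Sum>\<beta>\<in>p ` {..<n}. complex_of_real (d \<beta>) * (T \<beta> * cnj (T \<beta>)))"
    by (intro sum.cong refl)
      (simp add: block_def T_def sum_distrib_left sum_distrib_right mult.assoc, rule sum.swap)
  also have "\<dots> = (\<Sum>\<beta>\<in>p ` {..<n}. complex_of_real (d \<beta> * (cmod (T \<beta>))\<^sup>2))"
    by (simp add: complex_mult_cnj cmod_power2)
  finally show ?thesis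
    unfolding qf_def using assms by (simp add: sum_nonneg)
qed

lemma qf_kron_noise_pos:
  assumes "\<And>b. d b \<ge> 0" "c > 0" "\<exists>a<n. f a \<noteq> 0"
  shows "qf n (kron_noise N d v c) f > 0"
proof -
  obtain a where "a < n" "f a \<noteq> 0" using assms(3) by blast
  then have "(\<Sum>a<n. (cmod (f a))\<^sup>2) > 0"
    by (intro sum_pos2[of _ a]) auto
  then have "qf n (noise c) f > 0"
    using assms(2) by (simp add: qf_noise)
  moreover have "qf n (kron N d (outer v)) f \<ge> 0"
    using assms(1) by (rule qf_kron_outer_nonneg)
  ultimately show ?thesis
    unfolding kron_noise_def qf_add by linarith
qed

lemma system_matrices_eq_kron_noise:
  "Ac N h c k = kron_noise N (\<lambda>_. 1) (h k) c"
  "Bc N h c k = kron_noise N (\<lambda>b. 1 - (if b = 0 then 1 else 0)) (h k) c"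
  "Ap N h c k = kron_noise N (\<lambda>b. if b = 0 then 0 else 1) (h k) c"
  "Bp N h c k = kron_noise N (\<lambda>b. (if b = 0 then 0 else 1) - (if b = k then 1 else 0)) (h k) c"
  "Ae N g c e = kron_noise N (\<lambda>_. 1) (g e) c"
  "Be N g c s e = kron_noise N (\<lambda>b. 1 - (if b = s then 1 else 0)) (g e) c"
  "Cu N h c u = kron_noise N (\<lambda>b. if b = 0 \<or> b = u then 0 else 1) (h u) c"
  "Du N h c s u = kron_noise N (\<lambda>b. (if b = 0 \<or> b = u then 0 else 1) - (if b = s then 1 else 0)) (h u) c"
  unfolding Ac_def Bc_def Ap_def Bp_def Ae_def Be_def Cu_def Du_def
  by (simp_all flip: kron_noise_minus_kron) (simp_all add: kron_noise_def)

lemma hermitian_system_matrices: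
  "hermitian n (Ac N h c k)" "hermitian n (Bc N h c k)" "hermitian n (Ap N h c k)"
  "hermitian n (Bp N h c k)" "hermitian n (Ae N g c e)" "hermitian n (Be N g c s e)"
  "hermitian n (Cu N h c u)" "hermitian n (Du N h c s u)"
  unfolding system_matrices_eq_kron_noise by (rule hermitian_kron_noise)+

text \<open>The leakage matrices enter A_KKT and B_KKT with their roles swapped (B^(s)_e and D^(s)_u
  in A_KKT), which gives the W-terms their minus sign.\<close>
lemma qf_deriv_AKKT_minus_BKKT:
  fixes N K S E :: nat and h g :: "nat \<Rightarrow> cvec" and c ce \<alpha> :: real
  defines "n \<equiv> N * (K + 1)"
  shows "qf_deriv n (AKKT N K S E h g c ce \<alpha> 1 f) f i z - qf_deriv n (BKKT N K S E h g c ce \<alpha> 1 f) f i z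
    = (\<Sum>k\<in>{1..K}. wc N K h c \<alpha> f k * dlog_ratio n (Ac N h c k) (Bc N h c k) f i z)
        / (\<Sum>k\<in>{1..K}. wc N K h c \<alpha> f k)
      + (\<Sum>s\<in>{1..S}. dlog_ratio n (Ap N h c s) (Bp N h c s) f i z
          - ((\<Sum>e\<in>{1..E}. we N K g ce \<alpha> f s e * dlog_ratio n (Ae N g ce e) (Be N g ce s e) f i z)
             + (\<Sum>u\<in>{1..K} - {s}. wu N K h c \<alpha> f s u * dlog_ratio n (Cu N h c u) (Du N h c s u) f i z))
            / Wsum N K E h g c ce \<alpha> f s)
      + (\<Sum>m\<in>{S+1..K}. dlog_ratio n (Ap N h c m) (Bp N h c m) f i z)"
  unfolding AKKT_def BKKT_def Let_def mult_1 n_def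
  by (simp only: qf_deriv_add qf_deriv_sum qf_deriv_scale qf_deriv_term_mat)
    (simp add: dlog_ratio_def sum_subtractf sum.distrib sum_divide_distrib right_diff_distrib
      diff_divide_distrib add_divide_distrib ac_simps)

lemma AKKT_scale: "AKKT N K S E h g c ce \<alpha> w f = (\<lambda>a b. w * AKKT N K S E h g c ce \<alpha> 1 f a b)"
  unfolding AKKT_def Let_def by simp

lemma BKKT_scale: "BKKT N K S E h g c ce \<alpha> w f = (\<lambda>a b. w * BKKT N K S E h g c ce \<alpha> 1 f a b)"
  unfolding BKKT_def Let_def by simp

locale rs_perturbation =
  fixes N K E :: nat and h g :: "nat \<Rightarrow> cvec" and c ce \<alpha> :: real
    and f :: cvec and i :: nat and z :: complex
  assumes K_pos: "0 < K" and E_pos: "0 < E"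
    and c_pos: "0 < c" and ce_pos: "0 < ce" and \<alpha>_pos: "0 < \<alpha>"
    and f_nonzero: "\<exists>a<N * (K + 1). f a \<noteq> 0" and i_lt: "i < N * (K + 1)"
begin

abbreviation dim :: nat where "dim \<equiv> N * (K + 1)"

lemma qf_system_matrices_pos:
  "qf dim (Ac N h c k) f > 0" "qf dim (Bc N h c k) f > 0" "qf dim (Ap N h c k) f > 0"
  "k \<noteq> 0 \<Longrightarrow> qf dim (Bp N h c k) f > 0"
  "qf dim (Ae N g ce e) f > 0" "qf dim (Be N g ce s e) f > 0" "qf dim (Cu N h c u) f > 0"
  "s \<noteq> 0 \<Longrightarrow> s \<noteq> u \<Longrightarrow> qf dim (Du N h c s u) f > 0"
  unfolding system_matrices_eq_kron_noise
  by (rule qf_kron_noise_pos; use c_pos ce_pos f_nonzero in simp)+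

lemmas system_ratio_hyps = i_lt hermitian_system_matrices qf_system_matrices_pos

lemma wc_perturb_deriv:
  "((\<lambda>t. wc N K h c \<alpha> (perturb f i z t) k) has_real_derivative
     - wc N K h c \<alpha> f k * dlog_ratio dim (Ac N h c k) (Bc N h c k) f i z / (\<alpha> * ln 2)) (at 0)"
  unfolding wc_def by (rule DERIV_cong[OF ratio_powr_perturb_deriv]) (rule system_ratio_hyps | simp)+

lemma we_perturb_deriv:
  "((\<lambda>t. we N K g ce \<alpha> (perturb f i z t) s e) has_real_derivative
     we N K g ce \<alpha> f s e * dlog_ratio dim (Ae N g ce e) (Be N g ce s e) f i z / (\<alpha> * ln 2)) (at 0)"
  unfolding we_def by (rule DERIV_cong[OF ratio_powr_perturb_deriv]) (rule system_ratio_hyps | simp)+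

lemma wu_perturb_deriv:
  assumes "s \<noteq> 0" "s \<noteq> u"
  shows "((\<lambda>t. wu N K h c \<alpha> (perturb f i z t) s u) has_real_derivative
     wu N K h c \<alpha> f s u * dlog_ratio dim (Cu N h c u) (Du N h c s u) f i z / (\<alpha> * ln 2)) (at 0)"
  unfolding wu_def by (rule DERIV_cong[OF ratio_powr_perturb_deriv]) (rule system_ratio_hyps assms | simp)+

lemma sum_wc_pos: "(\<Sum>k\<in>{1..K}. wc N K h c \<alpha> f k) > 0"
proof -
  have "wc N K h c \<alpha> f k > 0" for k
  proof -
    have "ratio dim (Ac N h c k) (Bc N h c k) f > 0"
      by (rule ratio_pos) (rule system_ratio_hyps)+
    then show ?thesis
      unfolding wc_def by simp
  qed
  then show ?thesis
    using K_pos by (intro sum_pos) auto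
qed

lemma Wsum_pos: "Wsum N K E h g c ce \<alpha> f s > 0"
proof -
  have "we N K g ce \<alpha> f s e > 0" for e
  proof -
    have "ratio dim (Ae N g ce e) (Be N g ce s e) f > 0"
      by (rule ratio_pos) (rule system_ratio_hyps)+
    then show ?thesis
      unfolding we_def by simp
  qed
  then have "(\<Sum>e\<in>{1..E}. we N K g ce \<alpha> f s e) > 0"
    using E_pos by (intro sum_pos) auto
  moreover have "(\<Sum>u\<in>{1..K} - {s}. wu N K h c \<alpha> f s u) \<ge> 0"
    unfolding wu_def by (intro sum_nonneg) simp
  ultimately show ?thesis
    unfolding Wsum_def by linarith
qed

lemma ln_sum_wc_perturb_deriv:
  "((\<lambda>t. ln (\<Sum>k\<in>{1..K}. wc N K h c \<alpha> (perturb f i z t) k)) has_real_derivative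
     - (\<Sum>k\<in>{1..K}. wc N K h c \<alpha> f k * dlog_ratio dim (Ac N h c k) (Bc N h c k) f i z)
       / (\<Sum>k\<in>{1..K}. wc N K h c \<alpha> f k) / (\<alpha> * ln 2)) (at 0)"
  by (rule DERIV_cong[OF DERIV_chain2[OF DERIV_ln_divide DERIV_sum[OF wc_perturb_deriv]]])
    (use sum_wc_pos in \<open>simp_all add: sum_divide_distrib sum_negf ac_simps\<close>)

lemma ln_Wsum_perturb_deriv:
  assumes "s \<noteq> 0"
  shows "((\<lambda>t. ln (Wsum N K E h g c ce \<alpha> (perturb f i z t) s)) has_real_derivative
     ((\<Sum>e\<in>{1..E}. we N K g ce \<alpha> f s e * dlog_ratio dim (Ae N g ce e) (Be N g ce s e) f i z)
      + (\<Sum>u\<in>{1..K} - {s}. wu N K h c \<alpha> f s u * dlog_ratio dim (Cu N h c u) (Du N h c s u) f i z))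
     / Wsum N K E h g c ce \<alpha> f s / (\<alpha> * ln 2)) (at 0)"
proof -
  have "((\<lambda>t. Wsum N K E h g c ce \<alpha> (perturb f i z t) s) has_real_derivative
     ((\<Sum>e\<in>{1..E}. we N K g ce \<alpha> f s e * dlog_ratio dim (Ae N g ce e) (Be N g ce s e) f i z)
      + (\<Sum>u\<in>{1..K} - {s}. wu N K h c \<alpha> f s u * dlog_ratio dim (Cu N h c u) (Du N h c s u) f i z))
     / (\<alpha> * ln 2)) (at 0)"
    unfolding Wsum_def add_divide_distrib sum_divide_distrib
    using assms by (intro DERIV_add DERIV_sum we_perturb_deriv wu_perturb_deriv) auto
  from DERIV_chain2[OF DERIV_ln_divide this] show ?thesis
    using Wsum_pos by (simp add: ac_simps)
qed

lemma log_ratio_Ap_Bp_perturb_deriv: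
  assumes "k \<noteq> 0"
  shows "((\<lambda>t. log 2 (ratio dim (Ap N h c k) (Bp N h c k) (perturb f i z t))) has_real_derivative
     dlog_ratio dim (Ap N h c k) (Bp N h c k) f i z / ln 2) (at 0)"
  by (rule log_ratio_perturb_deriv) (rule system_ratio_hyps assms)+

lemma Lobj_perturb_deriv:
  "((\<lambda>t. Lobj N K S E h g c ce \<alpha> (perturb f i z t)) has_real_derivative
     (qf_deriv dim (AKKT N K S E h g c ce \<alpha> 1 f) f i z
      - qf_deriv dim (BKKT N K S E h g c ce \<alpha> 1 f) f i z) / ln 2) (at 0)"
proof -
  let ?Dl = "\<lambda>X Y. dlog_ratio dim X Y f i z"
  let ?W = "Wsum N K E h g c ce \<alpha> f"
  let ?Y = "\<lambda>s. (\<Sum>e\<in>{1..E}. we N K g ce \<alpha> f s e * ?Dl (Ae N g ce e) (Be N g ce s e))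
      + (\<Sum>u\<in>{1..K} - {s}. wu N K h c \<alpha> f s u * ?Dl (Cu N h c u) (Du N h c s u))"
  have common: "((\<lambda>t. - \<alpha> * ln (\<Sum>k\<in>{1..K}. wc N K h c \<alpha> (perturb f i z t) k)) has_real_derivative
      (\<Sum>k\<in>{1..K}. wc N K h c \<alpha> f k * ?Dl (Ac N h c k) (Bc N h c k))
        / (\<Sum>k\<in>{1..K}. wc N K h c \<alpha> f k) / ln 2) (at 0)"
    using DERIV_cmult[OF ln_sum_wc_perturb_deriv, of "- \<alpha>"] \<alpha>_pos by simp
  have secret: "((\<lambda>t. \<Sum>s\<in>{1..S}. log 2 (ratio dim (Ap N h c s) (Bp N h c s) (perturb f i z t))
        - \<alpha> * ln (Wsum N K E h g c ce \<alpha> (perturb f i z t) s)) has_real_derivative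
      (\<Sum>s\<in>{1..S}. ?Dl (Ap N h c s) (Bp N h c s) - ?Y s / ?W s) / ln 2) (at 0)"
    unfolding sum_divide_distrib
  proof (rule DERIV_sum)
    fix s :: nat assume "s \<in> {1..S}"
    then have "s \<noteq> 0" by simp
    from DERIV_diff[OF log_ratio_Ap_Bp_perturb_deriv DERIV_cmult[where c = \<alpha>, OF ln_Wsum_perturb_deriv],
      OF this this]
    show "((\<lambda>t. log 2 (ratio dim (Ap N h c s) (Bp N h c s) (perturb f i z t))
        - \<alpha> * ln (Wsum N K E h g c ce \<alpha> (perturb f i z t) s)) has_real_derivative
      (?Dl (Ap N h c s) (Bp N h c s) - ?Y s / ?W s) / ln 2) (at 0)"
      using \<alpha>_pos by (simp add: diff_divide_distrib)
  qed
  have normal: "((\<lambda>t. \<Sum>m\<in>{S+1..K}. log 2 (ratio dim (Ap N h c m) (Bp N h c m) (perturb f i z t)))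
      has_real_derivative (\<Sum>m\<in>{S+1..K}. ?Dl (Ap N h c m) (Bp N h c m)) / ln 2) (at 0)"
    unfolding sum_divide_distrib by (intro DERIV_sum log_ratio_Ap_Bp_perturb_deriv) simp
  from DERIV_add[OF DERIV_add[OF common secret] normal] show ?thesis
    unfolding Lobj_def qf_deriv_AKKT_minus_BKKT by (simp add: add_divide_distrib)
qed

end

lemma Lobj_wirtinger_grad:
  assumes "0 < K" "0 < E" "0 < c" "0 < ce" "0 < \<alpha>" "\<exists>a<N * (K + 1). f a \<noteq> 0"
  shows "has_wirtinger_conj_grad (N * (K + 1)) (Lobj N K S E h g c ce \<alpha>) f
    (\<lambda>j. (mvec (N * (K + 1)) (AKKT N K S E h g c ce \<alpha> 1 f) f j
          - mvec (N * (K + 1)) (BKKT N K S E h g c ce \<alpha> 1 f) f j) / complex_of_real (ln 2))"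
proof (rule has_wirtinger_conj_gradI)
  fix i z assume "i < N * (K + 1)"
  then interpret rs_perturbation N K E h g c ce \<alpha> f i z
    using assms by unfold_locales
  show "((\<lambda>t. Lobj N K S E h g c ce \<alpha> (perturb f i z t)) has_real_derivative
    2 * Re (cnj z * ((mvec dim (AKKT N K S E h g c ce \<alpha> 1 f) f i
          - mvec dim (BKKT N K S E h g c ce \<alpha> 1 f) f i) / complex_of_real (ln 2)))) (at 0)"
    using Lobj_perturb_deriv by (simp add: qf_deriv_def right_diff_distrib diff_divide_distrib)
qed

theorem lemma1:
  fixes N K S E :: nat
    and h g :: "nat \<Rightarrow> nat \<Rightarrow> complex"
    and \<sigma>2 \<sigma>e2 P \<alpha> :: real
    and lnum lden :: complex
    and f :: "nat \<Rightarrow> complex"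
    and Binv :: "nat \<Rightarrow> nat \<Rightarrow> complex"
  assumes "N > 0" "K > 0" "S > 0" "E > 0" "S \<le> K"
    and "\<sigma>2 > 0" "\<sigma>e2 > 0" "P > 0" "\<alpha> > 0"
    and "\<exists>i < N*(K+1). f i \<noteq> 0"
    and "complex_of_real (lam N K S E h g (\<sigma>2/P) (\<sigma>e2/P) \<alpha> f) = lnum / lden"
    and "lam N K S E h g (\<sigma>2/P) (\<sigma>e2/P) \<alpha> f \<noteq> 0"
    and "is_inverse (N*(K+1)) Binv (BKKT N K S E h g (\<sigma>2/P) (\<sigma>e2/P) \<alpha> lden f)"
    and "\<forall>i < N*(K+1).
           mvec (N*(K+1)) Binv (mvec (N*(K+1)) (AKKT N K S E h g (\<sigma>2/P) (\<sigma>e2/P) \<alpha> lnum f) f) i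
           = complex_of_real (lam N K S E h g (\<sigma>2/P) (\<sigma>e2/P) \<alpha> f) * f i"
  shows "has_wirtinger_conj_grad (N*(K+1)) (Lobj N K S E h g (\<sigma>2/P) (\<sigma>e2/P) \<alpha>) f (\<lambda>_. 0)"
proof -
  let ?n = "N * (K + 1)" and ?c = "\<sigma>2 / P" and ?ce = "\<sigma>e2 / P"
  let ?\<mu> = "complex_of_real (lam N K S E h g ?c ?ce \<alpha> f)"
  let ?A = "AKKT N K S E h g ?c ?ce \<alpha> 1 f" and ?B = "BKKT N K S E h g ?c ?ce \<alpha> 1 f"
  have lnum_nonzero: "lnum \<noteq> 0" and lnum_eq: "?\<mu> * lden = lnum"
    using assms(11,12) by auto
  have rows_eq: "mvec ?n ?A f i = mvec ?n ?B f i" if "i < ?n" for i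
  proof -
    have "lnum * mvec ?n ?A f i = ?\<mu> * (lden * mvec ?n ?B f i)"
      using mvec_generalized_eigen_of_inverse[OF assms(13,14) that]
      unfolding AKKT_scale[where w = lnum] BKKT_scale[where w = lden] mvec_scale .
    with lnum_eq lnum_nonzero show ?thesis
      by (simp add: mult.assoc[symmetric])
  qed
  have "has_wirtinger_conj_grad ?n (Lobj N K S E h g ?c ?ce \<alpha>) f
      (\<lambda>j. (mvec ?n ?A f j - mvec ?n ?B f j) / complex_of_real (ln 2))"
    using assms(2,4,6-10) by (intro Lobj_wirtinger_grad) simp_all
  then show ?thesis
    by (rule has_wirtinger_conj_grad_cong) (simp only: rows_eq diff_self div_0)
qed

end
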